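(* Let $T_1$ and $T_2$ be countable IILU-theories in the same predicate language $\Sigma$, and suppose that the restriction $T'_1$ of $T_1$ to the symbols that are non-empty for $T_1$ is language similar to the restriction $T'_2$ of $T_2$ to the symbols that are non-empty for $T_2$. Then $T_1$ and $T_2$ are language similar.
   Context: Theories are complete theories in predicate (relational) languages. A predicate symbol $R$ is non-empty for $T$ if $T\vdash\exists\bar x R(\bar x)$, and empty otherwise. A theory $T$ in a predicate language $\Sigma$ is language uniform (an LU-theory) if for each arity $n$, every permutation of the set of $n$-ary symbols that are non-empty for $T$ preserves $T$ (i.e., replacing each such symbol by its image maps $T$ onto $T$). An LU-theory $T$ is an IILU-theory if it has non-empty predicates and, whenever there is a non-empty $n$-ary predicate, there are infinitely many non-empty $n$-ary predicates and infinitely many empty $n$-ary predicates. A theory is countable if its language is countable. Theories $T_0,T_1$ in languages $\Sigma_0,\Sigma_1$ are language similar if $T_0$ can be obtained from $T_1$ by a bijective (arity-preserving) replacement of the symbols of $\Sigma_1$ by the symbols of $\Sigma_0$. *)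

theory Defs
  imports Main "HOL-Library.Countable_Set"
begin

text \<open>Predicate symbols have type 'p; a language is a set of symbols Sigma together with
  an arity function ar.\<close>

datatype 'p fm =
    Eq nat nat
  | Rel 'p "nat list"
  | Neg "'p fm"
  | Conj "'p fm" "'p fm"
  | Ex nat "'p fm"

fun syms :: "'p fm \<Rightarrow> 'p set" where
  "syms (Eq x y) = {}"
| "syms (Rel p xs) = {p}"
| "syms (Neg f) = syms f"
| "syms (Conj f g) = syms f \<union> syms g"
| "syms (Ex x f) = syms f"

fun wf_fm :: "'p set \<Rightarrow> ('p \<Rightarrow> nat) \<Rightarrow> 'p fm \<Rightarrow> bool" where
  "wf_fm S ar (Eq x y) = True"
| "wf_fm S ar (Rel p xs) = (p \<in> S \<and> length xs = ar p)"
| "wf_fm S ar (Neg f) = wf_fm S ar f"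
| "wf_fm S ar (Conj f g) = (wf_fm S ar f \<and> wf_fm S ar g)"
| "wf_fm S ar (Ex x f) = wf_fm S ar f"

fun fv :: "'p fm \<Rightarrow> nat set" where
  "fv (Eq x y) = {x, y}"
| "fv (Rel p xs) = set xs"
| "fv (Neg f) = fv f"
| "fv (Conj f g) = fv f \<union> fv g"
| "fv (Ex x f) = fv f - {x}"

definition sentence :: "'p set \<Rightarrow> ('p \<Rightarrow> nat) \<Rightarrow> 'p fm \<Rightarrow> bool" where
  "sentence S ar f \<longleftrightarrow> wf_fm S ar f \<and> fv f = {}"

fun sat :: "'d set \<Rightarrow> ('p \<Rightarrow> 'd list \<Rightarrow> bool) \<Rightarrow> (nat \<Rightarrow> 'd) \<Rightarrow> 'p fm \<Rightarrow> bool" where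
  "sat D I e (Eq x y) = (e x = e y)"
| "sat D I e (Rel p xs) = I p (map e xs)"
| "sat D I e (Neg f) = (\<not> sat D I e f)"
| "sat D I e (Conj f g) = (sat D I e f \<and> sat D I e g)"
| "sat D I e (Ex x f) = (\<exists>d\<in>D. sat D I (e(x := d)) f)"

definition Th :: "'p set \<Rightarrow> ('p \<Rightarrow> nat) \<Rightarrow> 'd set \<Rightarrow> ('p \<Rightarrow> 'd list \<Rightarrow> bool) \<Rightarrow> 'p fm set" where
  "Th S ar D I = {f. sentence S ar f \<and> sat D I (\<lambda>_. SOME d. d \<in> D) f}"

definition complete_theory :: "'d itself \<Rightarrow> 'p set \<Rightarrow> ('p \<Rightarrow> nat) \<Rightarrow> 'p fm set \<Rightarrow> bool" where
  "complete_theory _ S ar T \<longleftrightarrow>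
     (\<exists>(D::'d set) I. D \<noteq> {} \<and> T = Th S ar D I)"

definition exists_rel :: "('p \<Rightarrow> nat) \<Rightarrow> 'p \<Rightarrow> 'p fm" where
  "exists_rel ar p = foldr Ex [0..<ar p] (Rel p [0..<ar p])"

text \<open>Non-empty symbol: T proves \<exists>x. R(x). Since T is a complete (deductively closed)
  theory, provability is membership.\<close>
definition nonempty_sym :: "('p \<Rightarrow> nat) \<Rightarrow> 'p fm set \<Rightarrow> 'p \<Rightarrow> bool" where
  "nonempty_sym ar T p \<longleftrightarrow> exists_rel ar p \<in> T"

definition nonempty_syms :: "'p set \<Rightarrow> ('p \<Rightarrow> nat) \<Rightarrow> 'p fm set \<Rightarrow> 'p set" where
  "nonempty_syms S ar T = {p \<in> S. nonempty_sym ar T p}"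

definition LU_theory :: "'p set \<Rightarrow> ('p \<Rightarrow> nat) \<Rightarrow> 'p fm set \<Rightarrow> bool" where
  "LU_theory S ar T \<longleftrightarrow>
     (\<forall>n \<pi>. bij_betw \<pi> {p \<in> nonempty_syms S ar T. ar p = n} {p \<in> nonempty_syms S ar T. ar p = n}
            \<and> (\<forall>p. p \<notin> {p \<in> nonempty_syms S ar T. ar p = n} \<longrightarrow> \<pi> p = p)
        \<longrightarrow> map_fm \<pi> ` T = T)"

definition IILU_theory :: "'p set \<Rightarrow> ('p \<Rightarrow> nat) \<Rightarrow> 'p fm set \<Rightarrow> bool" where
  "IILU_theory S ar T \<longleftrightarrow>
     LU_theory S ar T \<and> nonempty_syms S ar T \<noteq> {} \<and>
     (\<forall>n. (\<exists>p \<in> nonempty_syms S ar T. ar p = n) \<longrightarrow>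
          infinite {p \<in> nonempty_syms S ar T. ar p = n} \<and>
          infinite {p \<in> S - nonempty_syms S ar T. ar p = n})"

definition restrict_th :: "'p set \<Rightarrow> 'p fm set \<Rightarrow> 'p fm set" where
  "restrict_th S' T = {f \<in> T. syms f \<subseteq> S'}"

definition language_similar ::
    "('p \<Rightarrow> nat) \<Rightarrow> 'p fm set \<Rightarrow> 'p set \<Rightarrow> 'p fm set \<Rightarrow> 'p set \<Rightarrow> bool" where
  "language_similar ar T0 S0 T1 S1 \<longleftrightarrow>
     (\<exists>\<sigma>. bij_betw \<sigma> S1 S0 \<and> (\<forall>p \<in> S1. ar (\<sigma> p) = ar p) \<and> map_fm \<sigma> ` T1 = T0)"

end

theory Submission
  imports Defs
begin

text \<open>Every symbol that is empty for a complete theory T is interpreted as the empty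
  relation, so replacing its atoms by falsum does not change the truth of a sentence;
  hence T is determined by its restriction to the non-empty symbols. A similarity of
  the restrictions therefore extends to a similarity of the whole theories as soon as
  it can be extended by an arity-preserving bijection between the empty symbols. For
  IILU-theories in a countable language the empty symbols of each arity that occurs
  among the non-empty ones form a countably infinite set in both theories, and the
  remaining arities carry no non-empty symbols at all, so such a bijection exists.\<close>

lemma fv_map_fm [simp]: "fv (map_fm \<sigma> f) = fv f"
  by (induction f) auto

lemma wf_fm_syms: "wf_fm S ar f \<Longrightarrow> syms f \<subseteq> S"
  by (induction f) auto

lemma wf_fm_map_fm:
  "wf_fm S ar f \<Longrightarrow> (\<And>p. p \<in> S \<Longrightarrow> \<sigma> p \<in> S' \<and> ar (\<sigma> p) = ar p) \<Longrightarrow> wf_fm S' ar (map_fm \<sigma> f)"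
  by (induction f) auto

lemma map_fm_cong_syms: "(\<And>p. p \<in> syms f \<Longrightarrow> \<sigma> p = \<tau> p) \<Longrightarrow> map_fm \<sigma> f = map_fm \<tau> f"
  by (induction f) auto

lemma sentence_map_fm:
  "sentence S ar f \<Longrightarrow> (\<And>p. p \<in> S \<Longrightarrow> \<sigma> p \<in> S' \<and> ar (\<sigma> p) = ar p) \<Longrightarrow> sentence S' ar (map_fm \<sigma> f)"
  unfolding sentence_def using wf_fm_map_fm[of S ar f \<sigma> S'] by auto

lemma map_fm_map_fm_inverse:
  assumes "\<And>p. p \<in> syms f \<Longrightarrow> \<sigma> (\<tau> p) = p"
  shows "map_fm \<sigma> (map_fm \<tau> f) = f"
proof -
  have "map_fm (\<sigma> \<circ> \<tau>) f = map_fm id f"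
    using assms by (intro map_fm_cong_syms) simp
  then show ?thesis
    by (simp add: fm.map_comp fm.map_id)
qed

lemma bij_betw_map_fm_sentences:
  assumes "bij_betw \<sigma> S S'" "\<And>p. p \<in> S \<Longrightarrow> ar (\<sigma> p) = ar p"
  shows "bij_betw (map_fm \<sigma>) {f. sentence S ar f} {f. sentence S' ar f}"
proof (rule bij_betw_byWitness)
  have inv_ar: "inv_into S \<sigma> q \<in> S \<and> ar (inv_into S \<sigma> q) = ar q" if "q \<in> S'" for q
    using assms that by (metis bij_betw_imp_surj_on bij_betw_inv_into_right inv_into_into)
  show "map_fm \<sigma> ` {f. sentence S ar f} \<subseteq> {f. sentence S' ar f}"
    using assms by (auto intro: sentence_map_fm dest: bij_betw_apply)
  show "map_fm (inv_into S \<sigma>) ` {f. sentence S' ar f} \<subseteq> {f. sentence S ar f}"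
    using inv_ar by (auto intro: sentence_map_fm)
  show "\<forall>f\<in>{f. sentence S ar f}. map_fm (inv_into S \<sigma>) (map_fm \<sigma> f) = f"
    using assms(1) by (auto simp: sentence_def bij_betw_inv_into_left dest!: wf_fm_syms
        intro!: map_fm_map_fm_inverse)
  show "\<forall>g\<in>{f. sentence S' ar f}. map_fm \<sigma> (map_fm (inv_into S \<sigma>) g) = g"
    using assms(1) by (auto simp: sentence_def bij_betw_inv_into_right dest!: wf_fm_syms
        intro!: map_fm_map_fm_inverse)
qed

definition falsum :: "'p fm" where
  "falsum = Ex 0 (Neg (Eq 0 0))"

fun prune_fm :: "'p set \<Rightarrow> 'p fm \<Rightarrow> 'p fm" where
  "prune_fm N (Eq x y) = Eq x y"
| "prune_fm N (Rel p xs) = (if p \<in> N then Rel p xs else falsum)"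
| "prune_fm N (Neg f) = Neg (prune_fm N f)"
| "prune_fm N (Conj f g) = Conj (prune_fm N f) (prune_fm N g)"
| "prune_fm N (Ex x f) = Ex x (prune_fm N f)"

lemma syms_prune_fm: "syms (prune_fm N f) \<subseteq> N"
  by (induction f) (auto simp: falsum_def)

lemma sentence_prune_fm: "sentence S ar f \<Longrightarrow> sentence S ar (prune_fm N f)"
proof -
  have "wf_fm S ar f \<Longrightarrow> wf_fm S ar (prune_fm N f)" "fv (prune_fm N f) \<subseteq> fv f"
    by (induction f) (auto simp: falsum_def)
  then show "sentence S ar f \<Longrightarrow> sentence S ar (prune_fm N f)"
    by (auto simp: sentence_def)
qed

lemma map_fm_prune_fm:
  "syms f \<subseteq> S \<Longrightarrow> (\<And>p. p \<in> S \<Longrightarrow> \<sigma> p \<in> N' \<longleftrightarrow> p \<in> N) \<Longrightarrow>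
    map_fm \<sigma> (prune_fm N f) = prune_fm N' (map_fm \<sigma> f)"
  by (induction f) (auto simp: falsum_def)

lemma sat_foldr_Ex:
  assumes "\<And>x. x \<notin> set vs \<Longrightarrow> e' x = e x" "\<And>x. x \<in> set vs \<Longrightarrow> e' x \<in> D" "sat D I e' g"
  shows "sat D I e (foldr Ex vs g)"
  using assms
proof (induction vs arbitrary: e)
  case (Cons v vs)
  have "sat D I (e(v := e' v)) (foldr Ex vs g)"
    using Cons.prems by (intro Cons.IH) auto
  then show ?case
    using Cons.prems(2) by auto
next
  case Nil
  then have "e' = e"
    by auto
  with Nil show ?case
    by simp
qed

lemma sentence_exists_rel: "p \<in> S \<Longrightarrow> sentence S ar (exists_rel ar p)"
proof -
  have "wf_fm S ar (foldr Ex vs g) = wf_fm S ar g" "fv (foldr Ex vs g) = fv g - set vs"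
    for vs and g :: "'a fm"
    by (induction vs) auto
  then show "p \<in> S \<Longrightarrow> sentence S ar (exists_rel ar p)"
    by (simp add: sentence_def exists_rel_def)
qed

lemma interpretation_of_empty_sym:
  assumes "p \<in> S - nonempty_syms S ar (Th S ar D I)" "set ds \<subseteq> D" "length ds = ar p"
  shows "\<not> I p ds"
proof
  assume "I p ds"
  define e0 where "e0 = (\<lambda>_::nat. SOME d. d \<in> D)"
  define e where "e = (\<lambda>i. if i < ar p then ds ! i else e0 i)"
  have "map e [0..<ar p] = ds"
    using assms(3) by (auto intro: nth_equalityI simp: e_def)
  with \<open>I p ds\<close> have "sat D I e (Rel p [0..<ar p])"
    by simp
  then have "sat D I e0 (exists_rel ar p)"
    unfolding exists_rel_def using assms(2,3)
    by (intro sat_foldr_Ex) (auto simp: e_def)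
  then have "exists_rel ar p \<in> Th S ar D I"
    using assms(1) sentence_exists_rel[of p S ar] by (simp add: Th_def e0_def)
  then show False
    using assms(1) by (simp add: nonempty_syms_def nonempty_sym_def)
qed

lemma sat_prune_fm_empty_syms:
  "wf_fm S ar f \<Longrightarrow> (\<And>x. e x \<in> D) \<Longrightarrow>
    sat D I e (prune_fm (nonempty_syms S ar (Th S ar D I)) f) = sat D I e f"
proof (induction f arbitrary: e)
  case (Rel p xs)
  then show ?case
    using interpretation_of_empty_sym[of p S ar D I "map e xs"] by (auto simp: falsum_def)
qed auto

lemma complete_theory_mem_iff_prune_fm:
  assumes "complete_theory TYPE('d) S ar T" "sentence S ar f"
  shows "f \<in> T \<longleftrightarrow> prune_fm (nonempty_syms S ar T) f \<in> restrict_th (nonempty_syms S ar T) T"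
proof -
  obtain D :: "'d set" and I where "D \<noteq> {}" and T: "T = Th S ar D I"
    using assms(1) unfolding complete_theory_def by blast
  define e where "e = (\<lambda>_::nat. SOME d. d \<in> D)"
  define N where "N = nonempty_syms S ar T"
  have "e x \<in> D" for x
    using \<open>D \<noteq> {}\<close> by (simp add: e_def some_in_eq)
  have "f \<in> T \<longleftrightarrow> sat D I e f"
    using assms(2) by (simp add: T Th_def e_def)
  also have "\<dots> \<longleftrightarrow> sat D I e (prune_fm N f)"
    using assms(2) \<open>\<And>x. e x \<in> D\<close> sat_prune_fm_empty_syms[of S ar f e D I]
    by (simp add: N_def T sentence_def)
  also have "\<dots> \<longleftrightarrow> prune_fm N f \<in> T"
    using sentence_prune_fm[OF assms(2)] by (simp add: T Th_def e_def)
  also have "\<dots> \<longleftrightarrow> prune_fm N f \<in> restrict_th N T"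
    using syms_prune_fm[of N f] by (simp add: restrict_th_def)
  finally show ?thesis
    by (simp add: N_def)
qed

lemma complete_theory_sentences: "complete_theory TYPE('d) S ar T \<Longrightarrow> T \<subseteq> {f. sentence S ar f}"
  by (auto simp: complete_theory_def Th_def)

lemma map_fm_image_eq_if_similar_on_nonempty_syms:
  assumes T1: "complete_theory TYPE('d1) S ar T1" and T2: "complete_theory TYPE('d2) S ar T2"
    and \<sigma>: "bij_betw \<sigma> S S" "\<And>p. p \<in> S \<Longrightarrow> ar (\<sigma> p) = ar p"
    and \<sigma>_nonempty: "\<And>p. p \<in> S \<Longrightarrow> \<sigma> p \<in> nonempty_syms S ar T1 \<longleftrightarrow> p \<in> nonempty_syms S ar T2"
    and similar: "map_fm \<sigma> ` restrict_th (nonempty_syms S ar T2) T2 = restrict_th (nonempty_syms S ar T1) T1"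
  shows "map_fm \<sigma> ` T2 = T1"
proof -
  define N1 where "N1 = nonempty_syms S ar T1"
  define N2 where "N2 = nonempty_syms S ar T2"
  define Sent where "Sent = {f. sentence S ar f}"
  have bij: "bij_betw (map_fm \<sigma>) Sent Sent"
    unfolding Sent_def using \<sigma> by (rule bij_betw_map_fm_sentences)
  have T_Sent: "T1 \<subseteq> Sent" "T2 \<subseteq> Sent"
    using complete_theory_sentences[OF T1] complete_theory_sentences[OF T2] by (simp_all add: Sent_def)
  have mem_iff: "f \<in> T2 \<longleftrightarrow> map_fm \<sigma> f \<in> T1" if "f \<in> Sent" for f
  proof -
    have "syms f \<subseteq> S"
      using that by (auto simp: Sent_def sentence_def dest: wf_fm_syms)
    have "f \<in> T2 \<longleftrightarrow> prune_fm N2 f \<in> restrict_th N2 T2"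
      using complete_theory_mem_iff_prune_fm[OF T2] that by (simp add: N2_def Sent_def)
    also have "\<dots> \<longleftrightarrow> map_fm \<sigma> (prune_fm N2 f) \<in> map_fm \<sigma> ` restrict_th N2 T2"
      using bij T_Sent that sentence_prune_fm
      by (intro inj_on_image_mem_iff[symmetric]) (auto simp: bij_betw_def Sent_def restrict_th_def)
    also have "map_fm \<sigma> (prune_fm N2 f) = prune_fm N1 (map_fm \<sigma> f)"
      using \<open>syms f \<subseteq> S\<close> \<sigma>_nonempty by (intro map_fm_prune_fm) (auto simp: N1_def N2_def)
    also have "prune_fm N1 (map_fm \<sigma> f) \<in> map_fm \<sigma> ` restrict_th N2 T2 \<longleftrightarrow> map_fm \<sigma> f \<in> T1"
      using complete_theory_mem_iff_prune_fm[OF T1] bij_betw_apply[OF bij that] similar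
      by (simp add: N1_def N2_def Sent_def)
    finally show ?thesis .
  qed
  show ?thesis
  proof
    show "map_fm \<sigma> ` T2 \<subseteq> T1"
      using mem_iff T_Sent by blast
    show "T1 \<subseteq> map_fm \<sigma> ` T2"
    proof
      fix h assume "h \<in> T1"
      then obtain f where "f \<in> Sent" "h = map_fm \<sigma> f"
        using T_Sent bij_betw_imp_surj_on[OF bij] by blast
      then show "h \<in> map_fm \<sigma> ` T2"
        using mem_iff \<open>h \<in> T1\<close> by blast
    qed
  qed
qed

lemma bij_betw_countable_infinite:
  "countable A \<Longrightarrow> countable B \<Longrightarrow> infinite A \<Longrightarrow> infinite B \<Longrightarrow>
    bij_betw (from_nat_into B \<circ> to_nat_on A) A B"
  by (metis bij_betw_from_nat_into bij_betw_trans to_nat_on_infinite)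

lemma bij_betw_arity_fibres:
  assumes "\<And>n. bij_betw (g n) {p \<in> A. ar p = n} {p \<in> B. ar p = n}"
  shows "bij_betw (\<lambda>p. g (ar p) p) A B" "\<And>p. p \<in> A \<Longrightarrow> ar (g (ar p) p) = ar p"
proof -
  have maps: "g (ar p) p \<in> B \<and> ar (g (ar p) p) = ar p" if "p \<in> A" for p
    using assms[of "ar p"] that by (auto dest: bij_betw_apply)
  then show "\<And>p. p \<in> A \<Longrightarrow> ar (g (ar p) p) = ar p"
    by blast
  show "bij_betw (\<lambda>p. g (ar p) p) A B"
    unfolding bij_betw_def
  proof
    show "inj_on (\<lambda>p. g (ar p) p) A"
    proof (rule inj_onI)
      fix p q assume "p \<in> A" "q \<in> A" "g (ar p) p = g (ar q) q"
      moreover from this have "ar p = ar q"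
        using maps by metis
      ultimately show "p = q"
        using assms[of "ar p"] by (auto simp: bij_betw_def inj_on_def)
    qed
    show "(\<lambda>p. g (ar p) p) ` A = B"
    proof
      show "(\<lambda>p. g (ar p) p) ` A \<subseteq> B"
        using maps by blast
      show "B \<subseteq> (\<lambda>p. g (ar p) p) ` A"
      proof
        fix q assume "q \<in> B"
        then have "q \<in> g (ar q) ` {p \<in> A. ar p = ar q}"
          using assms[of "ar q"] by (auto simp: bij_betw_def)
        then show "q \<in> (\<lambda>p. g (ar p) p) ` A"
          by force
      qed
    qed
  qed
qed

lemma arity_preserving_extension:
  assumes "N2 \<subseteq> S" "N1 \<subseteq> S" "bij_betw \<sigma>0 N2 N1" "\<And>p. p \<in> N2 \<Longrightarrow> ar (\<sigma>0 p) = ar p"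
    and "\<And>n. \<exists>g. bij_betw g {p \<in> S - N2. ar p = n} {p \<in> S - N1. ar p = n}"
  obtains \<sigma> where "bij_betw \<sigma> S S" "\<And>p. p \<in> S \<Longrightarrow> ar (\<sigma> p) = ar p"
    "\<And>p. p \<in> N2 \<Longrightarrow> \<sigma> p = \<sigma>0 p" "\<And>p. p \<in> S \<Longrightarrow> \<sigma> p \<in> N1 \<longleftrightarrow> p \<in> N2"
proof -
  obtain g where g: "\<And>n. bij_betw (g n) {p \<in> S - N2. ar p = n} {p \<in> S - N1. ar p = n}"
    using assms(5) by metis
  define \<sigma> where "\<sigma> p = (if p \<in> N2 then \<sigma>0 p else g (ar p) p)" for p
  have on_N2: "bij_betw \<sigma> N2 N1"
    using assms(3) by (rule bij_betw_cong[THEN iffD1, rotated]) (simp add: \<sigma>_def)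
  have off_N2: "bij_betw \<sigma> (S - N2) (S - N1)"
    using bij_betw_arity_fibres(1)[OF g] by (rule bij_betw_cong[THEN iffD1, rotated]) (simp add: \<sigma>_def)
  have "bij_betw \<sigma> (N2 \<union> (S - N2)) (N1 \<union> (S - N1))"
    using on_N2 off_N2 by (rule bij_betw_combine) blast
  moreover have "N2 \<union> (S - N2) = S" "N1 \<union> (S - N1) = S"
    using assms(1,2) by auto
  ultimately have "bij_betw \<sigma> S S"
    by simp
  moreover have "ar (\<sigma> p) = ar p" if "p \<in> S" for p
    using that assms(4) bij_betw_arity_fibres(2)[OF g] by (simp add: \<sigma>_def)
  moreover have "\<sigma> p \<in> N1 \<longleftrightarrow> p \<in> N2" if "p \<in> S" for p
    using that on_N2 off_N2 by (auto dest: bij_betw_apply)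
  ultimately show thesis
    using that by (simp add: \<sigma>_def)
qed

lemma nonempty_syms_subset: "nonempty_syms S ar T \<subseteq> S"
  by (auto simp: nonempty_syms_def)

lemma IILU_empty_syms_fibres_equipotent:
  assumes "countable S" "IILU_theory S ar T1" "IILU_theory S ar T2"
    and \<sigma>0: "bij_betw \<sigma>0 (nonempty_syms S ar T2) (nonempty_syms S ar T1)"
      "\<And>p. p \<in> nonempty_syms S ar T2 \<Longrightarrow> ar (\<sigma>0 p) = ar p"
  shows "\<exists>g. bij_betw g {p \<in> S - nonempty_syms S ar T2. ar p = n}
                        {p \<in> S - nonempty_syms S ar T1. ar p = n}"
proof -
  define N1 where "N1 = nonempty_syms S ar T1"
  define N2 where "N2 = nonempty_syms S ar T2"
  have arity_occurs_iff: "(\<exists>p \<in> N1. ar p = n) \<longleftrightarrow> (\<exists>p \<in> N2. ar p = n)"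
    using \<sigma>0 unfolding N1_def N2_def bij_betw_def by (metis imageE image_eqI)
  show ?thesis
  proof (cases "\<exists>p \<in> N2. ar p = n")
    case True
    then have "infinite {p \<in> S - N2. ar p = n}" "infinite {p \<in> S - N1. ar p = n}"
      using assms(2,3) arity_occurs_iff unfolding IILU_theory_def N1_def N2_def by blast+
    moreover have "countable {p \<in> S - N2. ar p = n}" "countable {p \<in> S - N1. ar p = n}"
      using assms(1) by (auto intro: countable_subset)
    ultimately show ?thesis
      unfolding N1_def N2_def by (blast intro: bij_betw_countable_infinite)
  next
    case False
    then have "{p \<in> S - N2. ar p = n} = {p \<in> S - N1. ar p = n}"
      using arity_occurs_iff by blast
    then show ?thesis
      unfolding N1_def N2_def by (metis bij_betw_id)
  qed
qed

theorem corollary4p3: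
  fixes S :: "'p set" and ar :: "'p \<Rightarrow> nat" and T1 T2 :: "'p fm set"
  assumes "countable S"
    and "complete_theory TYPE('d1) S ar T1"
    and "complete_theory TYPE('d2) S ar T2"
    and "IILU_theory S ar T1"
    and "IILU_theory S ar T2"
    and "language_similar ar
           (restrict_th (nonempty_syms S ar T1) T1) (nonempty_syms S ar T1)
           (restrict_th (nonempty_syms S ar T2) T2) (nonempty_syms S ar T2)"
  shows "language_similar ar T1 S T2 S"
proof -
  obtain \<sigma>0 where \<sigma>0: "bij_betw \<sigma>0 (nonempty_syms S ar T2) (nonempty_syms S ar T1)"
      "\<And>p. p \<in> nonempty_syms S ar T2 \<Longrightarrow> ar (\<sigma>0 p) = ar p"
      "map_fm \<sigma>0 ` restrict_th (nonempty_syms S ar T2) T2 = restrict_th (nonempty_syms S ar T1) T1"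
    using assms(6) unfolding language_similar_def by blast
  obtain \<sigma> where \<sigma>: "bij_betw \<sigma> S S" "\<And>p. p \<in> S \<Longrightarrow> ar (\<sigma> p) = ar p"
      "\<And>p. p \<in> nonempty_syms S ar T2 \<Longrightarrow> \<sigma> p = \<sigma>0 p"
      "\<And>p. p \<in> S \<Longrightarrow> \<sigma> p \<in> nonempty_syms S ar T1 \<longleftrightarrow> p \<in> nonempty_syms S ar T2"
    using arity_preserving_extension[OF nonempty_syms_subset nonempty_syms_subset \<sigma>0(1,2)
        IILU_empty_syms_fibres_equipotent[OF assms(1,4,5) \<sigma>0(1,2)]]
    by blast
  have "map_fm \<sigma> f = map_fm \<sigma>0 f" if "f \<in> restrict_th (nonempty_syms S ar T2) T2" for f
    using that \<sigma>(3) by (auto simp: restrict_th_def intro!: map_fm_cong_syms)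
  then have "map_fm \<sigma> ` restrict_th (nonempty_syms S ar T2) T2 = restrict_th (nonempty_syms S ar T1) T1"
    using \<sigma>0(3) by (simp cong: image_cong)
  then have "map_fm \<sigma> ` T2 = T1"
    using map_fm_image_eq_if_similar_on_nonempty_syms[OF assms(2,3) \<sigma>(1,2)] \<sigma>(4) by blast
  then show ?thesis
    unfolding language_similar_def using \<sigma>(1,2) by blast
qed

end
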